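(* Let $G$ be a group and let $V$ be a finite-dimensional vector space. Let $\tau\in\mathrm{LNUCA}_c(G,V)$ be stably injective. Then there exists $\sigma\in\mathrm{LNUCA}_c(G,V)$ such that $\sigma\circ\tau=\mathrm{Id}$.
   Context: For $g\in G$ and $x\in V^G$, $(gx)(h)=x(g^{-1}h)$. For finite $M\subset G$, $S=\mathcal{L}(V^M,V)$ and $s\in S^G$, $\sigma_s\colon V^G\to V^G$ is $\sigma_s(x)(g)=s(g)((g^{-1}x)\vert_M)$. $\mathrm{LNUCA}_c(G,V)$ is the set of maps $\sigma_s$ with $M$ finite and $s\in S^G$ constant outside some finite subset of $G$. For $s\in S^G$, $\Sigma(s)$ is the closure of $\{gs:g\in G\}$ in $S^G$ for the prodiscrete topology. $\tau=\sigma_s$ is stably injective if $\sigma_p$ is injective for every $p\in\Sigma(s)$. *)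

theory Defs
  imports Main "HOL.Vector_Spaces" "HOL-Library.Function_Algebras"
begin

text \<open>The group G is a type 'g of class group_add (not necessarily
commutative); g^-1 h is written -g + h.\<close>

definition fscale :: "('k \<Rightarrow> 'v \<Rightarrow> 'v) \<Rightarrow> 'k \<Rightarrow> ('g \<Rightarrow> 'v) \<Rightarrow> ('g \<Rightarrow> 'v)" where
  "fscale scale a y = (\<lambda>h. scale a (y h))"

definition gact :: "'g::group_add \<Rightarrow> ('g \<Rightarrow> 'b) \<Rightarrow> ('g \<Rightarrow> 'b)" where
  "gact g x = (\<lambda>h. x (- g + h))"

text \<open>Restriction to M, with V^M identified with functions vanishing outside M.\<close>
definition restr :: "'g set \<Rightarrow> ('g \<Rightarrow> 'v::zero) \<Rightarrow> ('g \<Rightarrow> 'v)" where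
  "restr M y = (\<lambda>h. if h \<in> M then y h else 0)"

text \<open>S = L(V^M, V): linear maps V^M -> V, represented as linear maps on V^G
that only depend on the restriction to M (this is a bijective representation).\<close>
definition linmaps :: "('k::field \<Rightarrow> 'v::ab_group_add \<Rightarrow> 'v) \<Rightarrow> 'g set \<Rightarrow> (('g \<Rightarrow> 'v) \<Rightarrow> 'v) set" where
  "linmaps scale M = {c. Vector_Spaces.linear (fscale scale) scale c \<and> (\<forall>y. c y = c (restr M y))}"

definition sigma :: "'g::group_add set \<Rightarrow> ('g \<Rightarrow> ('g \<Rightarrow> 'v::zero) \<Rightarrow> 'v) \<Rightarrow> ('g \<Rightarrow> 'v) \<Rightarrow> ('g \<Rightarrow> 'v)" where
  "sigma M s x = (\<lambda>g. s g (restr M (gact (- g) x)))"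

definition ev_const :: "('g \<Rightarrow> 'a) \<Rightarrow> bool" where
  "ev_const s \<longleftrightarrow> (\<exists>F c. finite F \<and> (\<forall>g. g \<notin> F \<longrightarrow> s g = c))"

definition LNUCA_c :: "('k::field \<Rightarrow> 'v::ab_group_add \<Rightarrow> 'v) \<Rightarrow> (('g::group_add \<Rightarrow> 'v) \<Rightarrow> ('g \<Rightarrow> 'v)) set" where
  "LNUCA_c scale = {\<tau>. \<exists>M s. finite M \<and> (\<forall>g. s g \<in> linmaps scale M) \<and> ev_const s \<and> \<tau> = sigma M s}"

text \<open>Orbit closure of s in S^G for the prodiscrete topology.\<close>
definition orbit_closure :: "('g::group_add \<Rightarrow> 'a) \<Rightarrow> ('g \<Rightarrow> 'a) set" where
  "orbit_closure s = {p. \<forall>F. finite F \<longrightarrow> (\<exists>g. \<forall>h\<in>F. p h = gact g s h)}"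

definition stably_injective :: "('k::field \<Rightarrow> 'v::ab_group_add \<Rightarrow> 'v) \<Rightarrow> (('g::group_add \<Rightarrow> 'v) \<Rightarrow> ('g \<Rightarrow> 'v)) \<Rightarrow> bool" where
  "stably_injective scale \<tau> \<longleftrightarrow> (\<exists>M s. finite M \<and> (\<forall>g. s g \<in> linmaps scale M) \<and> ev_const s
     \<and> \<tau> = sigma M s \<and> (\<forall>p\<in>orbit_closure s. inj (sigma M p)))"

end

theory Submission
  imports Defs
begin

text \<open>
  Over a finite-dimensional V, injectivity of \<open>\<sigma>\<^sub>p\<close> is witnessed on finite windows. The values at a
  cell g of the solutions of finite subsystems of the linear equations \<open>\<sigma>\<^sub>p x = 0\<close> form subspaces of V,
  which stabilise by finite dimensionality; with Zorn's lemma this yields a global solution with any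
  stable value at g, so injectivity forces the stable subspace to be 0. Hence x g vanishes as soon as
  \<open>\<sigma>\<^sub>p x\<close> vanishes on some finite window around g, i.e. x g is a linear function of \<open>\<sigma>\<^sub>p x\<close> on that
  window.

  Outside a finite set s equals a constant c, and for infinite G the constant configuration c lies in
  the orbit closure of s, so \<open>\<sigma>\<^sub>c\<close> is injective. Being equivariant, \<open>\<sigma>\<^sub>c\<close> has one local inverse
  valid at every cell, and it also inverts \<open>\<sigma>\<^sub>s\<close> at every cell whose window avoids the finite set where
  s differs from c. Together with the local inverses of \<open>\<sigma>\<^sub>s\<close> at the finitely many remaining cells this
  gives an eventually constant rule, i.e. a left inverse in \<open>LNUCA\<^sub>c\<close>.
\<close>

section \<open>Linear compactness over a finite-dimensional space\<close>

context finite_dimensional_vector_space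
begin

lemma subspace_down_directed_has_least:
  assumes "\<S> \<noteq> {}" and "\<And>S. S \<in> \<S> \<Longrightarrow> subspace S"
    and directed: "\<And>S T. S \<in> \<S> \<Longrightarrow> T \<in> \<S> \<Longrightarrow> \<exists>U\<in>\<S>. U \<subseteq> S \<inter> T"
  shows "\<exists>S0\<in>\<S>. \<forall>S\<in>\<S>. S0 \<subseteq> S"
proof -
  obtain S0 where S0: "S0 \<in> \<S>" and min_dim: "\<And>S. S \<in> \<S> \<Longrightarrow> dim S0 \<le> dim S"
    using ex_has_least_nat[of "\<lambda>S. S \<in> \<S>" _ dim] assms(1) by blast
  have "S0 \<subseteq> S" if S: "S \<in> \<S>" for S
  proof -
    obtain U where "U \<in> \<S>" "U \<subseteq> S \<inter> S0" using directed[OF S S0] by blast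
    then have "U = S0"
      using subspace_dim_equal[of U S0] assms(2) S0 min_dim by blast
    with \<open>U \<subseteq> S \<inter> S0\<close> show ?thesis by blast
  qed
  with S0 show ?thesis by blast
qed

end

locale local_linear_system = finite_dimensional_vector_space scale basis
  for scale :: "'a::field \<Rightarrow> 'b::ab_group_add \<Rightarrow> 'b" (infixr "*s" 75) and basis +
  fixes eqn :: "'c \<Rightarrow> ('i \<Rightarrow> 'b) \<Rightarrow> 'b"
  assumes eqn_add: "eqn n (x + y) = eqn n x + eqn n y"
    and eqn_scale: "eqn n (\<lambda>i. a *s x i) = a *s eqn n x"
    and eqn_local: "\<exists>D. finite D \<and> (\<forall>x y. (\<forall>i\<in>D. x i = y i) \<longrightarrow> eqn n x = eqn n y)"
begin

text \<open>Partial assignments of values to coordinates are encoded as sets of pairs \<open>(i, v)\<close>.\<close>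

definition solutions :: "('i \<times> 'b) set \<Rightarrow> 'c set \<Rightarrow> ('i \<Rightarrow> 'b) set" where
  "solutions P N = {x. (\<forall>n\<in>N. eqn n x = 0) \<and> (\<forall>p\<in>P. x (fst p) = snd p)}"

definition hom_values :: "'i \<Rightarrow> ('i \<times> 'b) set \<Rightarrow> 'c set \<Rightarrow> 'b set" where
  "hom_values i P N = (\<lambda>x. x i) ` solutions (fst ` P \<times> {0}) N"

definition finitely_solvable :: "('i \<times> 'b) set \<Rightarrow> bool" where
  "finitely_solvable R \<longleftrightarrow> (\<forall>P N. finite P \<longrightarrow> P \<subseteq> R \<longrightarrow> finite N \<longrightarrow> solutions P N \<noteq> {})"

lemma finitely_solvableD:
  "finitely_solvable R \<Longrightarrow> finite P \<Longrightarrow> P \<subseteq> R \<Longrightarrow> finite N \<Longrightarrow> \<exists>x. x \<in> solutions P N"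
  unfolding finitely_solvable_def by blast

lemma eqn_zero: "eqn n 0 = 0"
  using eqn_add[of n 0 0] by simp

lemma eqn_diff: "eqn n (x - y) = eqn n x - eqn n y"
  using eqn_add[of n "x - y" y] by (simp add: algebra_simps)

lemma solutions_antimono: "P \<subseteq> P' \<Longrightarrow> N \<subseteq> N' \<Longrightarrow> solutions P' N' \<subseteq> solutions P N"
  unfolding solutions_def by blast

lemma solutions_diff:
  "x \<in> solutions P N \<Longrightarrow> y \<in> solutions P N \<Longrightarrow> x - y \<in> solutions (fst ` P \<times> {0}) N"
  unfolding solutions_def by (auto simp: eqn_diff)

lemma solutions_add:
  "x \<in> solutions P N \<Longrightarrow> z \<in> solutions (fst ` P \<times> {0}) N \<Longrightarrow> x + z \<in> solutions P N"
  unfolding solutions_def by (fastforce simp: eqn_add)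

lemma subspace_hom_values: "subspace (hom_values i P N)"
  unfolding subspace_def hom_values_def
proof (intro conjI ballI allI)
  show "0 \<in> (\<lambda>x. x i) ` solutions (fst ` P \<times> {0}) N"
    by (rule image_eqI[of _ _ 0]) (auto simp: solutions_def eqn_zero)
next
  fix u v assume "u \<in> (\<lambda>x. x i) ` solutions (fst ` P \<times> {0}) N"
    "v \<in> (\<lambda>x. x i) ` solutions (fst ` P \<times> {0}) N"
  then obtain x y where "x \<in> solutions (fst ` P \<times> {0}) N" "y \<in> solutions (fst ` P \<times> {0}) N"
    "u = x i" "v = y i" by blast
  then show "u + v \<in> (\<lambda>x. x i) ` solutions (fst ` P \<times> {0}) N"
    by (intro image_eqI[of _ _ "x + y"]) (auto simp: solutions_def eqn_add)
next
  fix a u assume "u \<in> (\<lambda>x. x i) ` solutions (fst ` P \<times> {0}) N"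
  then obtain x where "x \<in> solutions (fst ` P \<times> {0}) N" "u = x i" by blast
  then show "a *s u \<in> (\<lambda>x. x i) ` solutions (fst ` P \<times> {0}) N"
    by (intro image_eqI[of _ _ "\<lambda>j. a *s x j"]) (auto simp: solutions_def eqn_scale)
qed

lemma hom_values_antimono:
  "P \<subseteq> P' \<Longrightarrow> N \<subseteq> N' \<Longrightarrow> hom_values i P' N' \<subseteq> hom_values i P N"
  unfolding hom_values_def by (intro image_mono solutions_antimono) auto

text \<open>This is the only place where finite dimensionality is used.\<close>

lemma hom_values_stabilize:
  "\<exists>P0 N0. finite P0 \<and> P0 \<subseteq> R \<and> finite N0 \<and>
     (\<forall>P N. finite P \<longrightarrow> P \<subseteq> R \<longrightarrow> finite N \<longrightarrow> hom_values i P0 N0 \<subseteq> hom_values i P N)"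
proof -
  let ?\<S> = "{hom_values i P N | P N. finite P \<and> P \<subseteq> R \<and> finite N}"
  have directed: "\<exists>U\<in>?\<S>. U \<subseteq> S \<inter> T" if ST: "S \<in> ?\<S>" "T \<in> ?\<S>" for S T
  proof -
    obtain P N P' N' where S: "S = hom_values i P N" and T: "T = hom_values i P' N'" and
      "finite P" "P \<subseteq> R" "finite N" "finite P'" "P' \<subseteq> R" "finite N'"
      using ST by blast
    moreover have "hom_values i (P \<union> P') (N \<union> N') \<subseteq> S \<inter> T"
      using hom_values_antimono[of P "P \<union> P'" N "N \<union> N'" i]
        hom_values_antimono[of P' "P \<union> P'" N' "N \<union> N'" i] unfolding S T by blast
    moreover have "hom_values i (P \<union> P') (N \<union> N') \<in> ?\<S>"
      using \<open>finite P\<close> \<open>P \<subseteq> R\<close> \<open>finite N\<close> \<open>finite P'\<close> \<open>P' \<subseteq> R\<close> \<open>finite N'\<close>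
      by blast
    ultimately show ?thesis by blast
  qed
  have nonempty: "?\<S> \<noteq> {}" by blast
  have subspaces: "subspace S" if "S \<in> ?\<S>" for S
    using that subspace_hom_values by blast
  obtain S0 where "S0 \<in> ?\<S>" and least: "\<forall>S\<in>?\<S>. S0 \<subseteq> S"
    by (rule bexE[OF subspace_down_directed_has_least[OF nonempty subspaces directed]])
  then obtain P0 N0 where S0: "S0 = hom_values i P0 N0" "finite P0" "P0 \<subseteq> R" "finite N0"
    by blast
  show ?thesis
  proof (intro exI conjI allI impI)
    fix P :: "('i \<times> 'b) set" and N :: "'c set"
    assume "finite P" "P \<subseteq> R" "finite N"
    then show "hom_values i P0 N0 \<subseteq> hom_values i P N"
      using least S0(1) by blast
  qed (use S0 in auto)
qed

text \<open>The value of any solution of the stabilising subsystem is admissible: for a larger subsystem, the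
  discrepancy with one of its solutions lies in the stabilised homogeneous values and can be removed.\<close>

lemma finitely_solvable_insert:
  assumes "finitely_solvable R"
  shows "\<exists>v. finitely_solvable (insert (i, v) R)"
proof -
  obtain P0 N0 where P0: "finite P0" "P0 \<subseteq> R" "finite N0"
    and least: "\<And>P N. finite P \<Longrightarrow> P \<subseteq> R \<Longrightarrow> finite N \<Longrightarrow> hom_values i P0 N0 \<subseteq> hom_values i P N"
    using hom_values_stabilize[of R i] by blast
  obtain x0 where x0: "x0 \<in> solutions P0 N0"
    using finitely_solvableD[OF assms P0] by blast
  have "finitely_solvable (insert (i, x0 i) R)"
    unfolding finitely_solvable_def
  proof (intro allI impI)
    fix P :: "('i \<times> 'b) set" and N :: "'c set"
    assume P: "finite P" "P \<subseteq> insert (i, x0 i) R" and N: "finite N"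
    define P' where "P' = P0 \<union> (P - {(i, x0 i)})"
    define N' where "N' = N0 \<union> N"
    have P': "finite P'" "P' \<subseteq> R" "finite N'"
      using P N P0 by (auto simp: P'_def N'_def)
    then obtain x where x: "x \<in> solutions P' N'"
      using finitely_solvableD[OF assms] by blast
    then have "x \<in> solutions P0 N0"
      using solutions_antimono[of P0 P' N0 N'] by (auto simp: P'_def N'_def)
    then have "x0 - x \<in> solutions (fst ` P0 \<times> {0}) N0"
      by (rule solutions_diff[OF x0])
    then have "x0 i - x i \<in> hom_values i P0 N0"
      unfolding hom_values_def by (rule image_eqI[rotated]) simp
    then have "x0 i - x i \<in> hom_values i P' N'"
      using least[OF P'] by blast
    then obtain z where z: "z \<in> solutions (fst ` P' \<times> {0}) N'" "z i = x0 i - x i"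
      unfolding hom_values_def by auto
    have "x + z \<in> solutions (insert (i, x0 i) P') N'"
      using solutions_add[OF x z(1)] z(2) by (simp add: solutions_def)
    moreover have "solutions (insert (i, x0 i) P') N' \<subseteq> solutions P N"
      using P by (intro solutions_antimono) (auto simp: P'_def N'_def)
    ultimately show "solutions P N \<noteq> {}" by blast
  qed
  then show ?thesis by blast
qed

lemma finitely_solvable_Union_chain:
  assumes "\<C> \<noteq> {}" "subset.chain \<A> \<C>" "\<And>R. R \<in> \<C> \<Longrightarrow> finitely_solvable R"
  shows "finitely_solvable (\<Union>\<C>)"
  unfolding finitely_solvable_def
proof (intro allI impI)
  fix P :: "('i \<times> 'b) set" and N :: "'c set"
  assume "finite P" "P \<subseteq> \<Union>\<C>" "finite N"
  moreover obtain R where "R \<in> \<C>" "P \<subseteq> R"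
    using finite_subset_Union_chain[OF \<open>finite P\<close> \<open>P \<subseteq> \<Union>\<C>\<close> assms(1,2)] .
  ultimately show "solutions P N \<noteq> {}"
    using assms(3) unfolding finitely_solvable_def by blast
qed

lemma finitely_solvable_extends_to_total:
  assumes "finitely_solvable R"
  obtains R' where "R \<subseteq> R'" "finitely_solvable R'" "\<And>i. \<exists>v. (i, v) \<in> R'"
proof -
  let ?\<A> = "{R'. R \<subseteq> R' \<and> finitely_solvable R'}"
  have "\<exists>R'\<in>?\<A>. \<forall>X\<in>?\<A>. R' \<subseteq> X \<longrightarrow> X = R'"
  proof (rule subset_Zorn_nonempty)
    show "?\<A> \<noteq> {}" using assms by blast
  next
    fix \<C> assume \<C>: "\<C> \<noteq> {}" "subset.chain ?\<A> \<C>"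
    then have "\<C> \<subseteq> ?\<A>" unfolding subset.chain_def by (elim conjE)
    then have "finitely_solvable (\<Union>\<C>)" and "R \<subseteq> \<Union>\<C>"
      using finitely_solvable_Union_chain[OF \<C>] \<C>(1) by blast+
    then show "\<Union>\<C> \<in> ?\<A>" by simp
  qed
  then obtain R' where R': "R \<subseteq> R'" "finitely_solvable R'"
    and maximal: "\<And>X. R \<subseteq> X \<Longrightarrow> finitely_solvable X \<Longrightarrow> R' \<subseteq> X \<Longrightarrow> X = R'"
    by (auto simp only: mem_Collect_eq Ball_def Bex_def)
  have "\<exists>v. (i, v) \<in> R'" for i
  proof -
    obtain v where "finitely_solvable (insert (i, v) R')"
      using finitely_solvable_insert[OF R'(2)] by blast
    then have "insert (i, v) R' = R'"
      using maximal[of "insert (i, v) R'"] R'(1) by blast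
    then show ?thesis by blast
  qed
  with R' show thesis by (rule that)
qed

lemma finitely_solvable_total_imp_solvable:
  assumes "finitely_solvable R" and total: "\<And>i. \<exists>v. (i, v) \<in> R"
  shows "solutions R UNIV \<noteq> {}"
proof -
  define y where "y i = (SOME v. (i, v) \<in> R)" for i
  have graph: "(i, y i) \<in> R" for i
    unfolding y_def using total[of i] by (rule someI_ex)
  have "eqn n y = 0" for n
  proof -
    obtain D where "finite D" and D: "\<forall>x y. (\<forall>i\<in>D. x i = y i) \<longrightarrow> eqn n x = eqn n y"
      using eqn_local[of n] by blast
    have "(\<lambda>i. (i, y i)) ` D \<subseteq> R"
      using graph by blast
    then obtain x where "x \<in> solutions ((\<lambda>i. (i, y i)) ` D) {n}"
      using finitely_solvableD[OF assms(1) finite_imageI[OF \<open>finite D\<close>]] by blast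
    then have "eqn n x = 0" and "\<forall>i\<in>D. x i = y i"
      by (simp_all add: solutions_def)
    then show ?thesis
      using D by metis
  qed
  moreover have "y i = v" if "(i, v) \<in> R" for i v
  proof -
    have "{(i, v), (i, y i)} \<subseteq> R" using that graph by blast
    moreover have "finite {(i, v), (i, y i)}" by simp
    ultimately obtain x where "x \<in> solutions {(i, v), (i, y i)} {}"
      using finitely_solvableD[OF assms(1) _ _ finite.emptyI] by blast
    then have "x i = v" and "x i = y i"
      unfolding solutions_def by auto
    then show ?thesis by metis
  qed
  ultimately have "y \<in> solutions R UNIV"
    by (auto simp: solutions_def)
  then show ?thesis by blast
qed

theorem finitely_solvable_imp_solvable:
  assumes "finitely_solvable R"
  shows "solutions R UNIV \<noteq> {}"
proof -
  obtain R' where "R \<subseteq> R'" and total: "finitely_solvable R'" "\<And>i. \<exists>v. (i, v) \<in> R'"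
    using finitely_solvable_extends_to_total[OF assms] by blast
  have "solutions R' UNIV \<noteq> {}"
    using finitely_solvable_total_imp_solvable[OF total] .
  moreover have "solutions R' UNIV \<subseteq> solutions R UNIV"
    using \<open>R \<subseteq> R'\<close> by (rule solutions_antimono) simp
  ultimately show ?thesis by blast
qed

lemma inj_imp_coordinate_determined_by_finite_window:
  assumes inj: "inj (\<lambda>x n. eqn n x)"
  shows "\<exists>N. finite N \<and> (\<forall>x. (\<forall>n\<in>N. eqn n x = 0) \<longrightarrow> x i = 0)"
proof -
  obtain N0 where "finite N0"
    and least: "\<And>N. finite N \<Longrightarrow> hom_values i {} N0 \<subseteq> hom_values i {} N"
    using hom_values_stabilize[of "{}" i] by auto
  have "v = 0" if v: "v \<in> hom_values i {} N0" for v
  proof -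
    have "finitely_solvable {(i, v)}"
      unfolding finitely_solvable_def
    proof (intro allI impI)
      fix P :: "('i \<times> 'b) set" and N :: "'c set"
      assume "finite P" "P \<subseteq> {(i, v)}" "finite N"
      moreover obtain x where "x \<in> solutions {} N" "x i = v"
        using least[OF \<open>finite N\<close>] v by (auto simp: hom_values_def)
      ultimately have "x \<in> solutions P N"
        by (auto simp: solutions_def)
      then show "solutions P N \<noteq> {}" by blast
    qed
    then obtain y where y: "y \<in> solutions {(i, v)} UNIV"
      using finitely_solvable_imp_solvable by blast
    then have "(\<lambda>n. eqn n y) = (\<lambda>n. eqn n 0)"
      by (simp add: solutions_def eqn_zero)
    then have "y = 0" by (rule injD[OF inj])
    with y show ?thesis by (simp add: solutions_def)
  qed
  moreover have "x i \<in> hom_values i {} N0" if "\<forall>n\<in>N0. eqn n x = 0" for x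
    using that by (auto simp: hom_values_def solutions_def)
  ultimately show ?thesis
    using \<open>finite N0\<close> by blast
qed

end

section \<open>Local left inverses of linear cellular automata\<close>

lemma vector_space_fscale: "vector_space scale \<Longrightarrow> vector_space (fscale scale)"
  unfolding vector_space_def fscale_def by (auto simp: fun_eq_iff)

lemma gact_gact: "gact a (gact b x) = gact (a + b) x"
  by (simp add: gact_def fun_eq_iff minus_add add.assoc[symmetric] diff_conv_add_uminus
      del: add_uminus_conv_diff)

lemma gact_zero [simp]: "gact 0 x = x"
  by (simp add: gact_def)

lemma restr_restr: "N \<subseteq> N' \<Longrightarrow> restr N (restr N' y) = restr N y"
  by (auto simp: restr_def fun_eq_iff)

lemma linmapsD:
  assumes "\<phi> \<in> linmaps scale N"
  shows "Vector_Spaces.linear (fscale scale) scale \<phi>" and "\<phi> (restr N y) = \<phi> y"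
  using assms unfolding linmaps_def by auto

lemma linmaps_mono:
  assumes "\<phi> \<in> linmaps scale N" and "N \<subseteq> N'"
  shows "\<phi> \<in> linmaps scale N'"
proof -
  have "\<phi> y = \<phi> (restr N' y)" for y
    using linmapsD(2)[OF assms(1)] restr_restr[OF assms(2)] by metis
  with linmapsD(1)[OF assms(1)] show ?thesis
    unfolding linmaps_def by blast
qed

lemma restr_linear:
  assumes "vector_space scale"
  shows "Vector_Spaces.linear (fscale scale) (fscale scale) (restr N)"
proof -
  interpret vector_space scale by fact
  show ?thesis
    unfolding linear_iff using vector_space_fscale[OF assms]
    by (auto simp: fun_eq_iff fscale_def restr_def)
qed

lemma gact_linear:
  "vector_space scale \<Longrightarrow> Vector_Spaces.linear (fscale scale) (fscale scale) (gact g)"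
  unfolding linear_iff using vector_space_fscale by (auto simp: fun_eq_iff fscale_def gact_def)

lemma sigma_add:
  assumes "p g \<in> linmaps scale M"
  shows "sigma M p (x + y) g = sigma M p x g + sigma M p y g"
proof -
  have "restr M (gact (- g) (x + y)) = restr M (gact (- g) x) + restr M (gact (- g) y)"
    by (auto simp: restr_def gact_def fun_eq_iff)
  then show ?thesis
    unfolding sigma_def using linmapsD(1)[OF assms] by (simp add: linear_iff)
qed

lemma sigma_scale:
  assumes "p g \<in> linmaps scale M" and "vector_space scale"
  shows "sigma M p (\<lambda>h. scale a (x h)) g = scale a (sigma M p x g)"
proof -
  interpret vector_space scale by fact
  have "restr M (gact (- g) (\<lambda>h. scale a (x h))) = fscale scale a (restr M (gact (- g) x))"
    by (auto simp: restr_def gact_def fun_eq_iff fscale_def)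
  then show ?thesis
    unfolding sigma_def using linmapsD(1)[OF assms(1)] by (simp add: linear_iff)
qed

lemma sigma_local:
  assumes "finite M"
  shows "\<exists>D. finite D \<and> (\<forall>x y. (\<forall>h\<in>D. x h = y h) \<longrightarrow> sigma M p x g = sigma M p y g)"
proof (intro exI conjI allI impI)
  show "finite ((+) g ` M)" using assms by simp
  fix x y :: "'a \<Rightarrow> 'b" assume "\<forall>h\<in>(+) g ` M. x h = y h"
  then have "restr M (gact (- g) x) = restr M (gact (- g) y)"
    by (auto simp: restr_def gact_def)
  then show "sigma M p x g = sigma M p y g"
    by (simp add: sigma_def)
qed

lemma sigma_linear:
  assumes "\<forall>g. p g \<in> linmaps scale M" and "vector_space scale"
  shows "Vector_Spaces.linear (fscale scale) (fscale scale) (sigma M p)"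
  unfolding linear_iff
  using vector_space_fscale[OF assms(2)] sigma_add[OF assms(1)[rule_format]]
    sigma_scale[OF assms(1)[rule_format] assms(2)]
  by (auto simp: fun_eq_iff fscale_def)

lemma linear_factor_through:
  assumes "vector_space s1" "vector_space s2" "vector_space s3"
    and R: "Vector_Spaces.linear s1 s2 R" and e: "Vector_Spaces.linear s1 s3 e"
    and ker: "\<And>x. R x = 0 \<Longrightarrow> e x = 0"
  obtains \<phi> where "Vector_Spaces.linear s2 s3 \<phi>" "\<And>x. \<phi> (R x) = e x"
proof -
  interpret p12: vector_space_pair s1 s2 using assms(1,2) by (rule vector_space_pair.intro)
  interpret p13: vector_space_pair s1 s3 using assms(1,3) by (rule vector_space_pair.intro)
  obtain g where g: "Vector_Spaces.linear s2 s1 g" "\<And>w. w \<in> range R \<Longrightarrow> R (g w) = w"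
    using p12.linear_exists_right_inverse_on[OF R p12.vs1.subspace_UNIV] by blast
  have "e (g (R x)) = e x" for x
  proof -
    have "R (g (R x) - x) = 0" using g(2) p12.linear_diff[OF R] by simp
    then have "e (g (R x) - x) = 0" by (rule ker)
    then show ?thesis using p13.linear_diff[OF e] by simp
  qed
  with Vector_Spaces.linear_compose[OF g(1) e] show thesis
    by (intro that[of "e \<circ> g"]) auto
qed

definition recovers_at :: "(('g::group_add \<Rightarrow> 'v) \<Rightarrow> ('g \<Rightarrow> 'v)) \<Rightarrow> 'g \<Rightarrow> (('g \<Rightarrow> 'v) \<Rightarrow> 'v) \<Rightarrow> bool" where
  "recovers_at \<tau> g \<phi> \<longleftrightarrow> (\<forall>x. \<phi> (gact (- g) (\<tau> x)) = x g)"

lemma sigma_recovers_at: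
  assumes fd: "finite_dimensional_vector_space scale B" and "finite M"
    and p: "\<forall>g. p g \<in> linmaps scale M" and inj: "inj (sigma M p)"
  obtains N \<phi> where "finite N" "\<phi> \<in> linmaps scale N" "recovers_at (sigma M p) g \<phi>"
proof -
  have vs: "vector_space scale"
    using fd by (simp add: finite_dimensional_vector_space_def)
  interpret local_linear_system scale B "\<lambda>n x. sigma M p x n"
    by (intro local_linear_system.intro local_linear_system_axioms.intro fd
        sigma_add[OF p[rule_format]] sigma_scale[OF p[rule_format] vs] sigma_local[OF \<open>finite M\<close>])
  obtain N' where "finite N'" and N': "\<And>x. \<forall>n\<in>N'. sigma M p x n = 0 \<Longrightarrow> x g = 0"
    using inj_imp_coordinate_determined_by_finite_window[of g] inj by auto
  define N where "N = (\<lambda>h. - g + h) ` N'"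
  define R where "R = restr N \<circ> gact (- g) \<circ> sigma M p"
  have R: "Vector_Spaces.linear (fscale scale) (fscale scale) R"
    using Vector_Spaces.linear_compose[OF Vector_Spaces.linear_compose[OF sigma_linear[OF p vs]
          gact_linear[OF vs]] restr_linear[OF vs]]
    by (simp add: R_def comp_assoc)
  have e: "Vector_Spaces.linear (fscale scale) scale (\<lambda>x. x g)"
    unfolding linear_iff using vs vector_space_fscale[OF vs] by (simp add: fscale_def)
  have "x g = 0" if "R x = 0" for x
  proof (rule N', intro ballI)
    fix n assume "n \<in> N'"
    then have "- g + n \<in> N" by (simp add: N_def)
    then have "R x (- g + n) = sigma M p x n"
      by (simp add: R_def restr_def gact_def add.assoc[symmetric])
    with \<open>R x = 0\<close> show "sigma M p x n = 0" by simp
  qed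
  then obtain \<phi>0 where \<phi>0: "Vector_Spaces.linear (fscale scale) scale \<phi>0" "\<And>x. \<phi>0 (R x) = x g"
    using linear_factor_through[OF vector_space_fscale[OF vs] vector_space_fscale[OF vs] vs R e]
    by blast
  show thesis
  proof
    show "finite N" using \<open>finite N'\<close> by (simp add: N_def)
    show "\<phi>0 \<circ> restr N \<in> linmaps scale N"
      unfolding linmaps_def
      using Vector_Spaces.linear_compose[OF restr_linear[OF vs] \<phi>0(1)] by (simp add: restr_restr)
    show "recovers_at (sigma M p) g (\<phi>0 \<circ> restr N)"
      using \<phi>0(2) by (simp add: recovers_at_def R_def)
  qed
qed

lemma recovers_at_equivariant:
  fixes \<tau> :: "('g::group_add \<Rightarrow> 'v) \<Rightarrow> ('g \<Rightarrow> 'v)"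
  assumes "\<And>a x. \<tau> (gact a x) = gact a (\<tau> x)" and "recovers_at \<tau> 0 \<phi>"
  shows "recovers_at \<tau> g \<phi>"
  unfolding recovers_at_def
proof
  fix x :: "'g \<Rightarrow> 'v"
  have "x g = gact (- g) x 0" by (simp add: gact_def)
  also have "\<dots> = \<phi> (\<tau> (gact (- g) x))"
    using assms(2) by (simp add: recovers_at_def)
  also have "\<dots> = \<phi> (gact (- g) (\<tau> x))"
    by (simp add: assms(1))
  finally show "\<phi> (gact (- g) (\<tau> x)) = x g" ..
qed

lemma recovers_at_window_cong:
  assumes "\<phi> \<in> linmaps scale N" and "recovers_at \<tau> g \<phi>"
    and window: "\<And>x h. h \<in> N \<Longrightarrow> \<tau>' x (g + h) = \<tau> x (g + h)"
  shows "recovers_at \<tau>' g \<phi>"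
  unfolding recovers_at_def
proof
  fix x
  have "restr N (gact (- g) (\<tau>' x)) = restr N (gact (- g) (\<tau> x))"
    using window by (auto simp: restr_def gact_def)
  then show "\<phi> (gact (- g) (\<tau>' x)) = x g"
    using assms(2) linmapsD(2)[OF assms(1)] unfolding recovers_at_def by metis
qed

lemma sigma_const_equivariant: "sigma M (\<lambda>_. c) (gact a x) = gact a (sigma M (\<lambda>_. c) x)"
  by (simp add: sigma_def gact_gact fun_eq_iff) (simp add: gact_def minus_add)

lemma self_in_orbit_closure: "s \<in> orbit_closure s"
  unfolding orbit_closure_def by (auto intro: exI[of _ 0])

lemma const_in_orbit_closure:
  assumes "infinite (UNIV :: 'g::group_add set)" and "finite F" and "\<And>g. g \<notin> F \<Longrightarrow> s g = c"
  shows "(\<lambda>_. c) \<in> orbit_closure (s :: 'g \<Rightarrow> 'a)"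
  unfolding orbit_closure_def
proof (intro CollectI allI impI)
  fix W :: "'g set" assume "finite W"
  then have "finite ((\<lambda>(h, f). h - f) ` (W \<times> F))"
    using assms(2) by (intro finite_imageI finite_cartesian_product)
  then obtain g where g: "g \<notin> (\<lambda>(h, f). h - f) ` (W \<times> F)"
    using ex_new_if_finite[OF assms(1)] by blast
  have "- g + h \<notin> F" if "h \<in> W" for h
  proof
    assume "- g + h \<in> F"
    with that have "(h, - g + h) \<in> W \<times> F" by blast
    moreover have "g = (\<lambda>(h, f). h - f) (h, - g + h)"
      by (simp add: diff_conv_add_uminus minus_add add.assoc del: add_uminus_conv_diff)
    ultimately have "g \<in> (\<lambda>(h, f). h - f) ` (W \<times> F)"
      by (rule rev_image_eqI)
    with g show False ..
  qed
  then have "\<forall>h\<in>W. c = gact g s h"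
    using assms(3) by (simp add: gact_def)
  then show "\<exists>g. \<forall>h\<in>W. c = gact g s h" ..
qed

lemma stably_injective_recovery_off_finite_set:
  fixes s :: "'g::group_add \<Rightarrow> ('g \<Rightarrow> 'v::ab_group_add) \<Rightarrow> 'v"
  assumes fd: "finite_dimensional_vector_space scale B" and "finite M"
    and s: "\<forall>g. s g \<in> linmaps scale M" and "ev_const s"
    and inj: "\<forall>p\<in>orbit_closure s. inj (sigma M p)"
  obtains E N \<phi> where "finite E" "finite N" "\<phi> \<in> linmaps scale N"
    "\<And>g. g \<notin> E \<Longrightarrow> recovers_at (sigma M s) g \<phi>"
proof (cases "finite (UNIV :: 'g set)")
  case True
  interpret vector_space scale
    using fd by (simp add: finite_dimensional_vector_space_def)
  have "(\<lambda>_. 0) \<in> linmaps scale {}"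
    unfolding linmaps_def linear_iff using vector_space_fscale vector_space_axioms by simp
  with True show thesis
    by (intro that[of UNIV "{}" "\<lambda>_. 0"]) auto
next
  case False
  obtain F c where "finite F" and F: "\<And>g. g \<notin> F \<Longrightarrow> s g = c"
    using \<open>ev_const s\<close> unfolding ev_const_def by blast
  have c: "\<forall>g. (\<lambda>_. c) g \<in> linmaps scale M"
    using s F ex_new_if_finite[OF False \<open>finite F\<close>] by auto
  have "inj (sigma M (\<lambda>_. c))"
    using inj const_in_orbit_closure[of F s c, OF False \<open>finite F\<close> F] by blast
  then obtain N \<phi> where "finite N" and \<phi>: "\<phi> \<in> linmaps scale N"
    and "recovers_at (sigma M (\<lambda>_. c)) 0 \<phi>"
    using sigma_recovers_at[OF fd \<open>finite M\<close> c] by metis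
  then have recovers_c: "recovers_at (sigma M (\<lambda>_. c)) g \<phi>" for g
    using recovers_at_equivariant sigma_const_equivariant by metis
  show thesis
  proof
    show "finite ((\<lambda>(f, h). f - h) ` (F \<times> N))"
      using \<open>finite F\<close> \<open>finite N\<close> by simp
    fix g assume g: "g \<notin> (\<lambda>(f, h). f - h) ` (F \<times> N)"
    have "sigma M s x (g + h) = sigma M (\<lambda>_. c) x (g + h)" if "h \<in> N" for x h
    proof -
      have "g + h \<notin> F"
        using g that by force
      then show ?thesis by (simp add: sigma_def F)
    qed
    then show "recovers_at (sigma M s) g \<phi>"
      using recovers_at_window_cong[OF \<phi> recovers_c] by blast
  qed (use \<open>finite N\<close> \<phi> in auto)
qed

lemma LNUCA_c_left_inverse_of_recovery:
  assumes "finite E"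
    and local: "\<And>g. g \<in> E \<Longrightarrow> \<exists>N \<phi>. finite N \<and> \<phi> \<in> linmaps scale N \<and> recovers_at \<tau> g \<phi>"
    and "finite N0" and \<phi>0: "\<phi>0 \<in> linmaps scale N0" and "\<And>g. g \<notin> E \<Longrightarrow> recovers_at \<tau> g \<phi>0"
  shows "\<exists>\<sigma>\<in>LNUCA_c scale. \<sigma> \<circ> \<tau> = id"
proof -
  obtain Nf \<phi>f where Nf: "\<And>g. g \<in> E \<Longrightarrow> finite (Nf g) \<and> \<phi>f g \<in> linmaps scale (Nf g)
      \<and> recovers_at \<tau> g (\<phi>f g)"
    using local by metis
  define N where "N = N0 \<union> \<Union>(Nf ` E)"
  define t where "t g = (if g \<in> E then \<phi>f g else \<phi>0)" for g
  have "finite N"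
    using \<open>finite N0\<close> \<open>finite E\<close> Nf by (simp add: N_def)
  have t: "t g \<in> linmaps scale N" for g
    using Nf \<phi>0 by (auto simp: t_def N_def intro: linmaps_mono)
  have "ev_const t"
    unfolding ev_const_def t_def using \<open>finite E\<close> by auto
  have "recovers_at \<tau> g (t g)" for g
    using Nf assms(5) by (simp add: t_def)
  then have "sigma N t (\<tau> x) = x" for x
    using linmapsD(2)[OF t] by (simp add: fun_eq_iff sigma_def recovers_at_def)
  then have "sigma N t \<circ> \<tau> = id"
    by (simp add: fun_eq_iff)
  moreover have "sigma N t \<in> LNUCA_c scale"
    unfolding LNUCA_c_def using \<open>finite N\<close> t \<open>ev_const t\<close> by blast
  ultimately show ?thesis by blast
qed

theorem theorem4p2:
  fixes scale :: "'k::field \<Rightarrow> 'v::ab_group_add \<Rightarrow> 'v"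
    and \<tau> :: "('g::group_add \<Rightarrow> 'v) \<Rightarrow> ('g \<Rightarrow> 'v)"
  assumes "\<exists>B. finite_dimensional_vector_space scale B"
    and "\<tau> \<in> LNUCA_c scale"
    and "stably_injective scale \<tau>"
  shows "\<exists>\<sigma>\<in>LNUCA_c scale. \<sigma> \<circ> \<tau> = id"
proof -
  obtain B where fd: "finite_dimensional_vector_space scale B"
    using assms(1) by blast
  obtain M s where "finite M" and s: "\<forall>g. s g \<in> linmaps scale M" and "ev_const s"
    and \<tau>: "\<tau> = sigma M s" and inj: "\<forall>p\<in>orbit_closure s. inj (sigma M p)"
    using assms(3) unfolding stably_injective_def by blast
  obtain E N \<phi> where "finite E" "finite N" "\<phi> \<in> linmaps scale N"
    and "\<And>g. g \<notin> E \<Longrightarrow> recovers_at (sigma M s) g \<phi>"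
    using stably_injective_recovery_off_finite_set[OF fd \<open>finite M\<close> s \<open>ev_const s\<close> inj] by blast
  moreover have "\<exists>N \<phi>. finite N \<and> \<phi> \<in> linmaps scale N \<and> recovers_at (sigma M s) g \<phi>" for g
    using sigma_recovers_at[OF fd \<open>finite M\<close> s] inj self_in_orbit_closure by metis
  ultimately show ?thesis
    unfolding \<tau> by (intro LNUCA_c_left_inverse_of_recovery) auto
qed

end
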